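(* Let $X_1,\dots,X_n$ be i.i.d. exponential random variables with mean $1$, let $X_{(1)}=\min_i X_i$, and let $\eta_{(1)}$ be the smallest critical point of $P_n(z)=(z-X_1)\cdots(z-X_n)$. Then $n\log n\,(\eta_{(1)}-X_{(1)})\to1$ in probability as $n\to\infty$.
   Context: Critical points are zeros of $P_n'$; they are all real since $P_n$ has only real zeros. *)

theory Defs
  imports "HOL-Probability.Probability" "HOL-Computational_Algebra.Polynomial"
begin

definition sample_poly :: "(nat \<Rightarrow> real) \<Rightarrow> nat \<Rightarrow> real poly" where
  "sample_poly x n = (\<Prod>i<n. [:- x i, 1:])"

definition smallest_critical_point :: "(nat \<Rightarrow> real) \<Rightarrow> nat \<Rightarrow> real" where
  "smallest_critical_point x n = Min {z. poly (pderiv (sample_poly x n)) z = 0}"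

end

theory Submission
  imports Defs "HOL-Real_Asymp.Real_Asymp"
begin

text \<open>
  The critical points of \<open>P\<^sub>n\<close> are the zeros of the logarithmic derivative
  \<open>\<Sum>\<^sub>i 1 / (z - X\<^sub>i)\<close>. If the minimum \<open>m = X\<^sub>k\<close> is separated by a gap \<open>G\<close> from the
  other points, this function falls from \<open>+\<infinity>\<close> on \<open>(m, m + G)\<close> and vanishes where
  \<open>z - m \<approx> 1 / S\<close>, \<open>S = \<Sum>\<^sub>i\<^sub>\<noteq>\<^sub>k 1 / (X\<^sub>i - m)\<close>; precisely, \<open>a S < 1 - a/G\<close> and \<open>1 < b S\<close>
  trap \<open>\<eta>\<^sub>(\<^sub>1\<^sub>) - m\<close> in \<open>(a, b]\<close>.
  For an exponential sample, \<open>S\<close> is sandwiched between the sums of \<open>1/x\<close> and \<open>1/x + c/x\<^sup>2\<close>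
  truncated at \<open>c = 2 h/n\<close> (plus the number of points below \<open>c\<close> divided by \<open>G\<close>); both truncated
  means are \<open>ln (1/c) + O(1) = ln n + O(ln h)\<close>, so by Chebyshev \<open>S = n ln n (1 + o(1))\<close>.
  With \<open>h = (ln n)\<^bsup>1/8\<^esup>\<close> and \<open>G = 1 / (n (ln n)\<^bsup>1/4\<^esup>)\<close> the exceptional events (no point below
  \<open>h/n\<close>, two points within \<open>G\<close> of each other below \<open>h/n\<close>, more than \<open>3h\<close> points below \<open>2h/n\<close>,
  large deviations of the truncated sums) have probability \<open>O((ln n)\<^bsup>-1/8\<^esup>)\<close>.
\<close>

section \<open>Critical points of sample polynomials\<close>

lemma poly_sample_poly: "poly (sample_poly x n) z = (\<Prod>i<n. z - x i)"
  by (simp add: sample_poly_def poly_prod)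

lemma poly_pderiv_sample_poly:
  "poly (pderiv (sample_poly x n)) z = (\<Sum>i<n. \<Prod>j\<in>{..<n}-{i}. z - x j)"
  by (simp add: sample_poly_def pderiv_prod poly_sum poly_prod pderiv_pCons)

lemma poly_pderiv_sample_poly_eq_log_deriv:
  assumes "\<And>i. i < n \<Longrightarrow> z \<noteq> x i"
  shows "poly (pderiv (sample_poly x n)) z = poly (sample_poly x n) z * (\<Sum>i<n. 1 / (z - x i))"
proof -
  have "poly (sample_poly x n) z * (\<Sum>i<n. 1 / (z - x i)) = (\<Sum>i<n. (\<Prod>j<n. z - x j) / (z - x i))"
    by (simp add: poly_sample_poly sum_distrib_left)
  also have "\<dots> = (\<Sum>i<n. \<Prod>j\<in>{..<n}-{i}. z - x j)"
  proof (rule sum.cong)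
    fix i assume i: "i \<in> {..<n}"
    then have "(\<Prod>j<n. z - x j) = (z - x i) * (\<Prod>j\<in>{..<n}-{i}. z - x j)"
      by (simp add: prod.remove)
    then show "(\<Prod>j<n. z - x j) / (z - x i) = (\<Prod>j\<in>{..<n}-{i}. z - x j)"
      using assms i by simp
  qed simp
  finally show ?thesis by (simp add: poly_pderiv_sample_poly)
qed

lemma poly_pderiv_sample_poly_below_min:
  fixes x :: "nat \<Rightarrow> real"
  assumes "0 < n" and "\<And>i. i < n \<Longrightarrow> z < x i"
  shows "poly (pderiv (sample_poly x n)) z \<noteq> 0"
proof -
  have "0 < (\<Sum>i<n. 1 / (x i - z))"
    using assms by (intro sum_pos) auto
  moreover have "(\<Sum>i<n. 1 / (z - x i)) = - (\<Sum>i<n. 1 / (x i - z))"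
    by (simp add: sum_negf[symmetric] minus_divide_right)
  moreover have "poly (sample_poly x n) z \<noteq> 0"
    using assms(2) by (fastforce simp: poly_sample_poly)
  ultimately show ?thesis
    using assms(2) by (subst poly_pderiv_sample_poly_eq_log_deriv) fastforce+
qed

locale isolated_min =
  fixes x :: "nat \<Rightarrow> real" and n k :: nat and m G :: real
  assumes k: "k < n" and min: "x k = m" and gap: "\<And>i. i < n \<Longrightarrow> i \<noteq> k \<Longrightarrow> m + G \<le> x i"
    and G: "0 < G"
begin

definition recip_gaps :: real where
  "recip_gaps = (\<Sum>i\<in>{..<n}-{k}. 1 / (x i - m))"

lemma log_deriv_sample_split:
  assumes "\<And>i. i < n \<Longrightarrow> z \<noteq> x i"
  shows "(\<Sum>i<n. 1 / (z - x i)) = 1 / (z - m) - (\<Sum>i\<in>{..<n}-{k}. 1 / (x i - z))"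
proof -
  have "(\<Sum>i<n. 1 / (z - x i)) = 1 / (z - x k) + (\<Sum>i\<in>{..<n}-{k}. 1 / (z - x i))"
    using k by (simp add: sum.remove)
  also have "(\<Sum>i\<in>{..<n}-{k}. 1 / (z - x i)) = - (\<Sum>i\<in>{..<n}-{k}. 1 / (x i - z))"
    by (simp add: sum_negf[symmetric] minus_divide_right)
  finally show ?thesis using min by simp
qed

lemma poly_pderiv_sample_poly_at_min: "poly (pderiv (sample_poly x n)) m \<noteq> 0"
proof -
  have "poly (pderiv (sample_poly x n)) m
      = (\<Prod>j\<in>{..<n}-{k}. m - x j) + (\<Sum>i\<in>{..<n}-{k}. \<Prod>j\<in>{..<n}-{i}. m - x j)"
    unfolding poly_pderiv_sample_poly using k by (simp add: sum.remove)
  moreover have "(\<Sum>i\<in>{..<n}-{k}. \<Prod>j\<in>{..<n}-{i}. m - x j) = 0"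
    using k min by (intro sum.neutral ballI prod_zero) auto
  moreover have "(\<Prod>j\<in>{..<n}-{k}. m - x j) \<noteq> 0"
    using gap G by (fastforce simp: prod_zero_iff)
  ultimately show ?thesis by simp
qed

lemma log_deriv_sample_pos_near_min:
  assumes a: "0 < a" "a < G" and a_small: "a * recip_gaps < 1 - a / G"
    and z: "m < z" "z \<le> m + a"
  shows "0 < (\<Sum>i<n. 1 / (z - x i))"
proof -
  have aG: "0 < 1 - a / G" using a G by (simp add: field_simps)
  have "(\<Sum>i\<in>{..<n}-{k}. 1 / (x i - z)) \<le> (\<Sum>i\<in>{..<n}-{k}. 1 / (x i - m) / (1 - a / G))"
  proof (rule sum_mono)
    fix i assume "i \<in> {..<n}-{k}"
    then have xi: "m + G \<le> x i" using gap by auto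
    have "a * G \<le> a * (x i - m)"
      using xi a by (intro mult_left_mono) auto
    then have "a \<le> (x i - m) * (a / G)"
      using G by (simp add: field_simps mult.commute)
    then have "(x i - m) * (1 - a / G) \<le> x i - z"
      using z by (simp add: algebra_simps)
    moreover have "0 < (x i - m) * (1 - a / G)" using xi G aG by simp
    ultimately show "1 / (x i - z) \<le> 1 / (x i - m) / (1 - a / G)"
      by (simp add: divide_simps mult.commute)
  qed
  also have "\<dots> = recip_gaps / (1 - a / G)" by (simp add: recip_gaps_def sum_divide_distrib)
  also have "\<dots> < 1 / a" using a_small aG a by (simp add: field_simps)
  also have "1 / a \<le> 1 / (z - m)" using z a by (simp add: frac_le)
  finally show ?thesis
    using z a gap min G by (subst log_deriv_sample_split) (fastforce, smt (verit))
qed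

lemma critical_point_near_min:
  assumes a: "0 < a" "a < b" "b < G"
    and a_small: "a * recip_gaps < 1 - a / G"
    and b_large: "1 < b * recip_gaps"
  obtains r where "m + a \<le> r" "r \<le> m + b" "poly (pderiv (sample_poly x n)) r = 0"
proof -
  define F where "F z = (\<Sum>i<n. 1 / (z - x i))" for z
  have off_sample: "z \<noteq> x i" if "m + a \<le> z" "z \<le> m + b" "i < n" for z i
    using that gap[of i] min a by (cases "i = k") auto
  have "0 < F (m + a)"
    unfolding F_def using a by (intro log_deriv_sample_pos_near_min[OF _ _ a_small]) auto
  moreover have "F (m + b) < 0"
  proof -
    have "recip_gaps \<le> (\<Sum>i\<in>{..<n}-{k}. 1 / (x i - (m + b)))"
      unfolding recip_gaps_def using gap a by (intro sum_mono frac_le) force+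
    moreover have "1 / b < recip_gaps"
      using b_large a by (simp add: field_simps)
    ultimately show ?thesis
      unfolding F_def using a off_sample by (subst log_deriv_sample_split) auto
  qed
  moreover have "continuous_on {m+a..m+b} F"
    unfolding F_def using off_sample by (intro continuous_intros) force
  ultimately obtain r where r: "m + a \<le> r" "r \<le> m + b" "F r = 0"
    using IVT2'[of F "m + b" 0 "m + a"] a by force
  moreover have "poly (pderiv (sample_poly x n)) r = poly (sample_poly x n) r * F r"
    unfolding F_def using off_sample r by (intro poly_pderiv_sample_poly_eq_log_deriv) auto
  ultimately show thesis using that by simp
qed

theorem smallest_critical_point_near_min:
  assumes a: "0 < a" "a < b" "b < G"
    and a_small: "a * recip_gaps < 1 - a / G"
    and b_large: "1 < b * recip_gaps"
  shows "m + a < smallest_critical_point x n" "smallest_critical_point x n \<le> m + b"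
proof -
  define R where "R = {z. poly (pderiv (sample_poly x n)) z = 0}"
  obtain r where r: "m + a \<le> r" "r \<le> m + b" "r \<in> R"
    using critical_point_near_min[OF assms] unfolding R_def by blast
  have "pderiv (sample_poly x n) \<noteq> 0"
    using poly_pderiv_sample_poly_at_min by auto
  then have "finite R" unfolding R_def by (rule poly_roots_finite)
  have "z \<notin> R" if "z \<le> m + a" for z
  proof (cases z m rule: linorder_cases)
    case less
    have "z < x i" if "i < n" for i
      using that gap[of i] min G less by (cases "i = k") auto
    then show ?thesis
      unfolding R_def using k by (auto dest: poly_pderiv_sample_poly_below_min[rotated])
  next
    case equal
    then show ?thesis unfolding R_def using poly_pderiv_sample_poly_at_min by simp
  next
    case greater
    then have "z \<noteq> x i" if "i < n" for i
      using that gap[of i] min a \<open>z \<le> m + a\<close> by (cases "i = k") auto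
    moreover have "0 < (\<Sum>i<n. 1 / (z - x i))"
      using a a_small greater \<open>z \<le> m + a\<close> by (intro log_deriv_sample_pos_near_min) auto
    ultimately show ?thesis
      unfolding R_def by (simp add: poly_pderiv_sample_poly_eq_log_deriv poly_sample_poly)
  qed
  moreover have "Min R \<in> R" "Min R \<le> r"
    using \<open>finite R\<close> r by (auto intro: Min_in)
  ultimately have "m + a < Min R" "Min R \<le> m + b"
    using r by (meson not_le, linarith)
  then show "m + a < smallest_critical_point x n" "smallest_critical_point x n \<le> m + b"
    unfolding smallest_critical_point_def R_def by simp_all
qed

end

section \<open>Samples with an isolated minimum and regular truncated sums\<close>

definition recip_above :: "real \<Rightarrow> real \<Rightarrow> real" where
  "recip_above c x = (if c \<le> x then 1 / x else 0)"

definition recip_above_shift :: "real \<Rightarrow> real \<Rightarrow> real" where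
  "recip_above_shift c x = (if c \<le> x then 1 / x + c / x\<^sup>2 else 0)"

lemma recip_above_measurable [measurable]: "recip_above c \<in> borel_measurable borel"
  unfolding recip_above_def by measurable

lemma recip_above_shift_measurable [measurable]: "recip_above_shift c \<in> borel_measurable borel"
  unfolding recip_above_shift_def by measurable

lemma recip_above_shift_bounds:
  assumes "0 < c"
  shows "0 \<le> recip_above_shift c x" "recip_above_shift c x \<le> 2 / c"
proof -
  show "0 \<le> recip_above_shift c x" using assms by (simp add: recip_above_shift_def)
  have "c / x\<^sup>2 \<le> 1 / c" if "c \<le> x"
  proof -
    have "c * c \<le> x\<^sup>2" using that assms by (simp add: power2_eq_square mult_mono)
    then show ?thesis using that assms by (simp add: field_simps)
  qed
  then show "recip_above_shift c x \<le> 2 / c"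
    using assms frac_le[of 1 1 c x] by (auto simp: recip_above_shift_def)
qed

lemma recip_above_bounds:
  assumes "0 < c"
  shows "0 \<le> recip_above c x" "recip_above c x \<le> recip_above_shift c x"
  using assms by (auto simp: recip_above_def recip_above_shift_def)

lemma recip_shift_le:
  fixes x m c :: real
  assumes "0 < m" "2 * m \<le> c" "c \<le> x"
  shows "1 / (x - m) \<le> 1 / x + c / x\<^sup>2"
proof -
  have "m * (x + c) \<le> c / 2 * (x + c)"
    using assms by (intro mult_right_mono) auto
  also have "\<dots> \<le> c * x"
    using assms mult_left_mono[of c x c] by (simp add: algebra_simps)
  finally have "x * x \<le> (x - m) * (x + c)"
    by (simp add: algebra_simps)
  then show ?thesis
    using assms by (simp add: field_simps power2_eq_square)
qed

context isolated_min
begin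

lemma recip_above_sum_le_recip_gaps:
  assumes "0 \<le> m" "m < c"
  shows "(\<Sum>i<n. recip_above c (x i)) \<le> recip_gaps"
proof -
  have "(\<Sum>i<n. recip_above c (x i)) = (\<Sum>i\<in>{..<n}-{k}. recip_above c (x i))"
    using k min assms by (simp add: sum.remove recip_above_def)
  also have "\<dots> \<le> recip_gaps"
    unfolding recip_gaps_def
  proof (rule sum_mono)
    fix i assume "i \<in> {..<n}-{k}"
    then have "m + G \<le> x i" using gap by auto
    then show "recip_above c (x i) \<le> 1 / (x i - m)"
      using G assms by (auto simp: recip_above_def intro!: frac_le)
  qed
  finally show ?thesis .
qed

lemma recip_gaps_le_recip_above_shift_sum:
  assumes "0 < m" "2 * m \<le> c"
  shows "recip_gaps \<le> (\<Sum>i<n. recip_above_shift c (x i)) + (\<Sum>i<n. indicator {..c} (x i)) / G"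
proof -
  have "recip_gaps \<le> (\<Sum>i\<in>{..<n}-{k}. recip_above_shift c (x i) + indicator {..c} (x i) / G)"
    unfolding recip_gaps_def
  proof (rule sum_mono)
    fix i assume "i \<in> {..<n}-{k}"
    then have xi: "m + G \<le> x i" using gap by auto
    show "1 / (x i - m) \<le> recip_above_shift c (x i) + indicator {..c} (x i) / G"
    proof (cases "c \<le> x i")
      case True
      moreover have "0 \<le> indicator {..c} (x i) / G" using G by simp
      ultimately show ?thesis
        using recip_shift_le[OF assms True] by (simp add: recip_above_shift_def)
    next
      case False
      then show ?thesis
        using xi G assms frac_le[of 1 1 G "x i - m"] recip_above_shift_bounds(1)[of c "x i"]
        by (simp add: indicator_def)
    qed
  qed
  also have "\<dots> \<le> (\<Sum>i<n. recip_above_shift c (x i) + indicator {..c} (x i) / G)"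
    using G assms recip_above_shift_bounds(1) by (intro sum_mono2) auto
  finally show ?thesis by (simp add: sum.distrib sum_divide_distrib)
qed

lemma rescaled_smallest_critical_point:
  assumes "0 < L" "0 < \<epsilon>" "\<epsilon> < 1" "(1 + \<epsilon>) / L < G"
    and "(1 - \<epsilon>) / L * recip_gaps < 1 - (1 - \<epsilon>) / L / G"
    and "1 < (1 + \<epsilon>) / L * recip_gaps"
  shows "\<bar>L * (smallest_critical_point x n - m) - 1\<bar> \<le> \<epsilon>"
proof -
  have "(1 - \<epsilon>) / L < (1 + \<epsilon>) / L"
    using assms(1,2) by (simp add: divide_strict_right_mono)
  note bounds = smallest_critical_point_near_min[OF _ this assms(4-6)]
  have "1 - \<epsilon> < L * (smallest_critical_point x n - m)"
    using bounds(1) assms(1-3) by (simp add: field_simps)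
  moreover have "L * (smallest_critical_point x n - m) \<le> 1 + \<epsilon>"
    using bounds(2) assms(1-3) by (simp add: field_simps)
  ultimately show ?thesis by simp
qed

end

lemma rescaled_recip_gaps_lower:
  fixes S n l \<epsilon> D :: real
  assumes "0 < \<epsilon>" "\<epsilon> \<le> 1/2" "0 < l" "0 < n" "0 \<le> D" "3 * D < \<epsilon> * l"
    and "n * (l - D) - \<epsilon> * (n * l) / 8 \<le> S"
  shows "1 < (1 + \<epsilon>) / (n * l) * S"
proof -
  have "\<epsilon> * (\<epsilon> * l) \<le> 1/2 * (\<epsilon> * l)" "\<epsilon> * D \<le> 1/2 * D"
    using assms mult_right_mono[of \<epsilon> "1/2" "\<epsilon> * l"] mult_right_mono[of \<epsilon> "1/2" D] by auto
  moreover have "(1 + \<epsilon>) * (l - D - \<epsilon> * l / 8)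
      = l + 7/8 * (\<epsilon> * l) - \<epsilon> * (\<epsilon> * l) / 8 - D - \<epsilon> * D"
    by (simp add: field_simps)
  ultimately have "l < (1 + \<epsilon>) * (l - D - \<epsilon> * l / 8)"
    using assms by linarith
  also have "\<dots> = (1 + \<epsilon>) / n * (n * (l - D) - \<epsilon> * (n * l) / 8)"
    using assms by (simp add: field_simps)
  also have "\<dots> \<le> (1 + \<epsilon>) / n * S"
    using assms by (intro mult_left_mono) auto
  finally show ?thesis
    using assms by (simp add: field_simps)
qed

lemma rescaled_recip_gaps_upper:
  fixes S n l \<epsilon> R G :: real
  assumes "0 < \<epsilon>" "\<epsilon> \<le> 1/2" "0 < l" "0 < n" "0 < G" "0 \<le> R" "R + 1 / (n * G) < 7/8 * \<epsilon> * l"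
    and "S \<le> n * (l + R) + \<epsilon> * (n * l) / 8"
  shows "(1 - \<epsilon>) / (n * l) * S < 1 - (1 - \<epsilon>) / (n * l) / G"
proof -
  define r where "r = 1 / (n * G)"
  have r: "0 < r" using assms by (simp add: r_def)
  have "(1 - \<epsilon>) / (n * l) * S \<le> (1 - \<epsilon>) / (n * l) * (n * (l + R) + \<epsilon> * (n * l) / 8)"
    using assms by (intro mult_left_mono) auto
  also have "\<dots> = (1 - \<epsilon>) * (l + R + \<epsilon> * l / 8) / l"
    using assms by (simp add: field_simps)
  finally have "(1 - \<epsilon>) / (n * l) * S \<le> (1 - \<epsilon>) * (l + R + \<epsilon> * l / 8) / l" .
  moreover have "(1 - \<epsilon>) / (n * l) / G = (1 - \<epsilon>) * r / l"
    using assms by (simp add: r_def field_simps)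
  moreover have "(1 - \<epsilon>) * (l + R + \<epsilon> * l / 8) + (1 - \<epsilon>) * r < l"
  proof -
    have "0 \<le> \<epsilon> * (\<epsilon> * l)" "0 \<le> \<epsilon> * (R + r)"
      using assms r by auto
    moreover have "(1 - \<epsilon>) * (l + R + \<epsilon> * l / 8) + (1 - \<epsilon>) * r
        = l - 7/8 * (\<epsilon> * l) - \<epsilon> * (\<epsilon> * l) / 8 + (R + r) - \<epsilon> * (R + r)"
      by (simp add: field_simps)
    ultimately show ?thesis
      using assms(7) unfolding r_def[symmetric] by linarith
  qed
  then have "(1 - \<epsilon>) * (l + R + \<epsilon> * l / 8) / l + (1 - \<epsilon>) * r / l < 1"
    using assms(3) by (simp add: add_divide_distrib[symmetric])
  ultimately show ?thesis by linarith
qed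

theorem rescaled_critical_gap_of_regular_sample:
  fixes x :: "nat \<Rightarrow> real" and n :: nat and \<epsilon> h h2 :: real
  defines "\<beta> \<equiv> h / real n" and "G \<equiv> 1 / (real n * h2)"
  assumes n: "2 \<le> n" and \<epsilon>: "0 < \<epsilon>" "\<epsilon> \<le> 1/2" and h: "1 \<le> h" "0 < h2"
    and gap_scale: "(1 + \<epsilon>) * h2 < ln n"
    and log_scale: "3 * (ln (2 * h) + 1) < \<epsilon> * ln n"
    and error_scale: "3 + 3 * h * h2 + h2 < 7/8 * \<epsilon> * ln n"
    and pos: "\<And>i. i < n \<Longrightarrow> 0 < x i"
    and small: "\<exists>i<n. x i \<le> \<beta>"
    and spread: "\<And>i j. i < n \<Longrightarrow> j < n \<Longrightarrow> i \<noteq> j \<Longrightarrow> x i \<le> \<beta> \<Longrightarrow> x i \<le> x j \<Longrightarrow> x i + G \<le> x j"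
    and count: "(\<Sum>i<n. indicator {..2 * \<beta>} (x i)) < 3 * h"
    and upper: "(\<Sum>i<n. recip_above_shift (2 * \<beta>) (x i)) \<le> n * (3 - ln (2 * \<beta>)) + \<epsilon> * (n * ln n) / 8"
    and lower: "n * (- 1 - ln (2 * \<beta>)) - \<epsilon> * (n * ln n) / 8 \<le> (\<Sum>i<n. recip_above (2 * \<beta>) (x i))"
  shows "\<bar>n * ln n * (smallest_critical_point x n - Min (x ` {..<n})) - 1\<bar> \<le> \<epsilon>"
proof -
  define l where "l = ln (real n)"
  define m where "m = Min (x ` {..<n})"
  have l: "0 < l" using n by (simp add: l_def)
  have G: "0 < G" using n h by (simp add: G_def)
  have ln_\<beta>: "ln (2 * \<beta>) = ln (2 * h) - l"
    using n h by (simp add: \<beta>_def l_def ln_div)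
  have "m \<in> x ` {..<n}" "\<forall>i<n. m \<le> x i"
    using n unfolding m_def by (auto intro!: Min_in simp: lessThan_empty_iff)
  then obtain k where k: "k < n" "x k = m" and m_le: "\<And>i. i < n \<Longrightarrow> m \<le> x i" by auto
  have m: "0 < m" "m \<le> \<beta>" using small pos k m_le by force+
  have "m + G \<le> x i" if "i < n" "i \<noteq> k" for i
    using spread[OF k(1) that(1)] that k m m_le by (simp add: add.commute)
  then interpret isolated_min x n k m G
    using k G by unfold_locales auto
  have "n * (l - (ln (2 * h) + 1)) - \<epsilon> * (n * l) / 8 \<le> recip_gaps"
    using lower recip_above_sum_le_recip_gaps[of "2 * \<beta>"] m
    unfolding ln_\<beta> l_def by (simp add: algebra_simps)
  then have b_large: "1 < (1 + \<epsilon>) / (n * l) * recip_gaps"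
    using \<epsilon> l n h log_scale
    by (intro rescaled_recip_gaps_lower[where D="ln (2 * h) + 1"]) (auto simp: l_def)
  have "(\<Sum>i<n. indicator {..2 * \<beta>} (x i)) / G = (\<Sum>i<n. indicator {..2 * \<beta>} (x i)) * (n * h2)"
    by (simp add: G_def)
  also have "\<dots> \<le> 3 * h * (n * h2)"
    using count n h by (intro mult_right_mono) auto
  finally have "(\<Sum>i<n. indicator {..2 * \<beta>} (x i)) / G \<le> 3 * h * (n * h2)" .
  moreover have "0 \<le> real n * ln (2 * h)" using h by simp
  ultimately have "recip_gaps \<le> n * (l + (3 + 3 * h * h2)) + \<epsilon> * (n * l) / 8"
    using recip_gaps_le_recip_above_shift_sum[of "2 * \<beta>"] m
      upper
    unfolding ln_\<beta> l_def by (simp add: algebra_simps)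
  then have a_small: "(1 - \<epsilon>) / (n * l) * recip_gaps < 1 - (1 - \<epsilon>) / (n * l) / G"
    using \<epsilon> l n h error_scale
    by (intro rescaled_recip_gaps_upper) (auto simp: l_def G_def)
  have "real n * ((1 + \<epsilon>) * h2) < real n * l"
    using gap_scale n by (intro mult_strict_left_mono) (auto simp: l_def)
  then have "(1 + \<epsilon>) / (n * l) < G"
    using n h l by (simp add: G_def field_simps)
  from rescaled_smallest_critical_point[OF _ _ _ this a_small b_large]
  show ?thesis using \<epsilon> l n unfolding l_def m_def by simp
qed

section \<open>Chebyshev bounds for sums over i.i.d. samples\<close>

locale iid_density_sample = prob_space M for M :: "'a measure" +
  fixes X :: "nat \<Rightarrow> 'a \<Rightarrow> real" and f :: "real \<Rightarrow> real"
  assumes indep: "indep_vars (\<lambda>_. borel) X UNIV"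
    and distributed: "\<And>i. distributed M lborel (X i) f"
    and density_nonneg: "\<And>x. 0 \<le> f x"
begin

lemma random_variable [measurable]: "X i \<in> borel_measurable M"
  using distributed_measurable[OF distributed[of i]] by simp

definition law_integral :: "(real \<Rightarrow> real) \<Rightarrow> real" where
  "law_integral g = (\<integral>x. f x * g x \<partial>lborel)"

lemma integrable_bounded_transform:
  assumes [measurable]: "g \<in> borel_measurable borel" and "\<And>x. \<bar>g x\<bar> \<le> (B::real)"
  shows "integrable M (\<lambda>\<omega>. g (X i \<omega>))"
  using assms by (intro integrable_const_bound[where B=B]) auto

lemma expectation_transform:
  assumes [measurable]: "g \<in> borel_measurable borel"
  shows "expectation (\<lambda>\<omega>. g (X i \<omega>)) = law_integral g"
  unfolding law_integral_def
  by (rule distributed_integral[OF distributed, symmetric]) (auto simp: density_nonneg)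

lemma integrable_law_integral:
  assumes [measurable]: "g \<in> borel_measurable borel" and "\<And>x. \<bar>g x\<bar> \<le> B"
  shows "integrable lborel (\<lambda>x. f x * g x)"
  using distributed_integrable[OF distributed[of 0], of g]
    integrable_bounded_transform[OF assms, of 0] density_nonneg by simp

lemma law_integral_mono:
  assumes [measurable]: "g \<in> borel_measurable borel" "h \<in> borel_measurable borel"
    and "\<And>x. \<bar>g x\<bar> \<le> B" "\<And>x. \<bar>h x\<bar> \<le> B" "\<And>x. g x \<le> h x"
  shows "law_integral g \<le> law_integral h"
  unfolding law_integral_def
  by (rule integral_mono[OF integrable_law_integral[OF assms(1,3)] integrable_law_integral[OF assms(2,4)]])
     (simp add: assms(5) density_nonneg mult_left_mono)

lemma law_integral_nonneg:
  assumes "\<And>x. 0 \<le> g x"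
  shows "0 \<le> law_integral g"
  unfolding law_integral_def by (rule integral_nonneg_AE) (simp add: assms density_nonneg)

lemma law_integral_const: "law_integral (\<lambda>_. c) = c"
  using expectation_transform[of "\<lambda>_. c" 0] by (simp add: prob_space)

lemma indep_var_pair:
  assumes "i \<noteq> j"
  shows "indep_var borel (X i) borel (X j)"
proof -
  have "indep_var borel ((\<lambda>f. f i) \<circ> (\<lambda>\<omega>. restrict (\<lambda>i. X i \<omega>) {i}))
      borel ((\<lambda>f. f j) \<circ> (\<lambda>\<omega>. restrict (\<lambda>i. X i \<omega>) {j}))"
    using assms by (intro indep_var_compose[OF indep_var_restrict[OF indep]]) auto
  then show ?thesis by (simp add: comp_def)
qed

lemma expectation_transform_pair:
  assumes "i \<noteq> j" and [measurable]: "g \<in> borel_measurable borel"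
    and "\<And>x. \<bar>g x\<bar> \<le> B"
  shows "expectation (\<lambda>\<omega>. g (X i \<omega>) * g (X j \<omega>)) = law_integral g ^ 2"
proof -
  have "indep_var borel (g \<circ> X i) borel (g \<circ> X j)"
    by (rule indep_var_compose[OF indep_var_pair[OF assms(1)]]) auto
  then have "expectation (\<lambda>\<omega>. (g \<circ> X i) \<omega> * (g \<circ> X j) \<omega>)
      = expectation (g \<circ> X i) * expectation (g \<circ> X j)"
    by (rule indep_var_lebesgue_integral)
       (auto simp: comp_def intro: integrable_bounded_transform[OF _ assms(3)])
  then show ?thesis by (simp add: comp_def expectation_transform power2_eq_square)
qed

lemma variance_transform_le:
  assumes [measurable]: "g \<in> borel_measurable borel" and "\<And>x. 0 \<le> g x" "\<And>x. g x \<le> B"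
  shows "expectation (\<lambda>\<omega>. (g (X i \<omega>) - law_integral g)\<^sup>2) \<le> B * law_integral g"
proof -
  define \<mu> where "\<mu> = law_integral g"
  have bounded: "\<bar>g x\<bar> \<le> B" "\<bar>(g x)\<^sup>2\<bar> \<le> B\<^sup>2" for x
    using assms(2,3)[of x] by (auto simp: power_mono)
  have integrable: "integrable M (\<lambda>\<omega>. g (X i \<omega>))" "integrable M (\<lambda>\<omega>. (g (X i \<omega>))\<^sup>2)"
    by (rule integrable_bounded_transform[OF _ bounded(1)], simp,
        rule integrable_bounded_transform[OF _ bounded(2)], simp)
  have "expectation (\<lambda>\<omega>. (g (X i \<omega>) - \<mu>)\<^sup>2)
      = expectation (\<lambda>\<omega>. (g (X i \<omega>))\<^sup>2 - 2 * \<mu> * g (X i \<omega>) + \<mu>\<^sup>2)"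
    by (simp add: power2_eq_square algebra_simps)
  also have "\<dots> = expectation (\<lambda>\<omega>. (g (X i \<omega>))\<^sup>2) - \<mu>\<^sup>2"
    using integrable by (simp add: prob_space expectation_transform \<mu>_def power2_eq_square)
  also have "expectation (\<lambda>\<omega>. (g (X i \<omega>))\<^sup>2) \<le> expectation (\<lambda>\<omega>. B * g (X i \<omega>))"
    using integrable assms(2,3) by (intro integral_mono) (auto simp: power2_eq_square mult_right_mono)
  also have "\<dots> = B * \<mu>" by (simp add: expectation_transform \<mu>_def)
  finally show ?thesis using zero_le_power2[of \<mu>] unfolding \<mu>_def by linarith
qed

theorem chebyshev_sum_transform:
  assumes [measurable]: "g \<in> borel_measurable borel" and g: "\<And>x. 0 \<le> g x" "\<And>x. g x \<le> B"
    and "0 < t"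
  shows "prob {\<omega>\<in>space M. t \<le> \<bar>(\<Sum>i<n. g (X i \<omega>)) - real n * law_integral g\<bar>}
           \<le> real n * B * law_integral g / t\<^sup>2"
proof -
  define \<mu> where "\<mu> = law_integral g"
  define Z where "Z i \<omega> = g (X i \<omega>) - \<mu>" for i \<omega>
  have B: "0 \<le> B" using g[of 0] by linarith
  have Z_bounded: "\<bar>g x - \<mu>\<bar> \<le> B + \<bar>\<mu>\<bar>" for x
    using g[of x] by linarith
  have integrable_Z: "integrable M (\<lambda>\<omega>. Z i \<omega> * Z j \<omega>)" for i j
    using mult_mono[OF Z_bounded Z_bounded] B unfolding Z_def
    by (intro integrable_const_bound[where B="(B + \<bar>\<mu>\<bar>)\<^sup>2"])
       (auto simp: abs_mult power2_eq_square)
  have E_Z: "expectation (\<lambda>\<omega>. Z i \<omega> * Z j \<omega>) = (if i = j then expectation (\<lambda>\<omega>. (Z i \<omega>)\<^sup>2) else 0)"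
    for i j
  proof (cases "i = j")
    case False

    have "expectation (\<lambda>\<omega>. Z i \<omega> * Z j \<omega>) = (law_integral (\<lambda>x. g x - \<mu>))\<^sup>2"
      unfolding Z_def using Z_bounded by (intro expectation_transform_pair[OF False]) auto
    also have "law_integral (\<lambda>x. g x - \<mu>) = expectation (\<lambda>\<omega>. g (X 0 \<omega>) - \<mu>)"
      by (rule expectation_transform[symmetric]) simp
    also have "\<dots> = 0"
      using integrable_bounded_transform[of g B 0] g
      by (simp add: prob_space expectation_transform \<mu>_def abs_le_iff)
    finally show ?thesis using False by simp
  qed (simp add: power2_eq_square)
  define S where "S \<omega> = (\<Sum>i<n. g (X i \<omega>))" for \<omega>
  have S_bounded: "\<bar>(S \<omega>)\<^sup>2\<bar> \<le> (real n * B)\<^sup>2" for \<omega>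
    using sum_mono[of "{..<n}" "\<lambda>i. g (X i \<omega>)" "\<lambda>_. B"] g
    by (auto simp: S_def sum_nonneg intro!: power_mono)
  have E_S: "expectation S = real n * \<mu>"
    unfolding S_def \<mu>_def using integrable_bounded_transform[of g B] g
    by (subst Bochner_Integration.integral_sum) (auto simp: expectation_transform abs_le_iff)
  have "variance S = expectation (\<lambda>\<omega>. (\<Sum>i<n. Z i \<omega>)\<^sup>2)"
    unfolding E_S S_def Z_def by (simp add: sum_subtractf)
  also have "\<dots> = expectation (\<lambda>\<omega>. \<Sum>i<n. \<Sum>j<n. Z i \<omega> * Z j \<omega>)"
    by (simp add: power2_eq_square sum_product)
  also have "\<dots> = (\<Sum>i<n. \<Sum>j<n. expectation (\<lambda>\<omega>. Z i \<omega> * Z j \<omega>))"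
    by (simp add: Bochner_Integration.integral_sum integrable_Z)
  also have "\<dots> = (\<Sum>i<n. expectation (\<lambda>\<omega>. (g (X i \<omega>) - \<mu>)\<^sup>2))"
    by (simp only: E_Z sum.delta finite_lessThan lessThan_iff if_True) (simp add: Z_def)
  also have "\<dots> \<le> real n * B * \<mu>"
    using sum_mono[of "{..<n}" _ "\<lambda>_. B * \<mu>"] variance_transform_le[OF assms(1) g]
    by (simp add: \<mu>_def mult.assoc)
  finally have "variance S / t\<^sup>2 \<le> real n * B * \<mu> / t\<^sup>2"
    by (simp add: divide_right_mono)
  moreover have "prob {\<omega>\<in>space M. t \<le> \<bar>S \<omega> - expectation S\<bar>} \<le> variance S / t\<^sup>2"
    using S_bounded \<open>0 < t\<close> unfolding S_def
    by (intro Chebyshev_inequality integrable_const_bound[where B="(real n * B)\<^sup>2"]) auto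
  ultimately show ?thesis unfolding S_def E_S \<mu>_def by simp
qed

end

section \<open>Exponential samples\<close>

lemma one_minus_exp_minus_ge:
  fixes t :: real
  assumes "0 \<le> t" "t \<le> 1"
  shows "t / 2 \<le> 1 - exp (- t)"
proof -
  have "exp (- t) \<le> 1 / (1 + t)"
    using exp_ge_add_one_self[of t] assms by (simp add: exp_minus field_simps)
  moreover have "t / 2 \<le> 1 - 1 / (1 + t)"
    using assms mult_left_le[of t t] by (simp add: field_simps)
  ultimately show ?thesis by linarith
qed

lemma integral_inverse_shift_atLeastAtMost:
  fixes c :: real
  assumes "0 < c" "c \<le> 1"
  shows "integrable lborel (\<lambda>x. indicator {c..1} x * (1 / x + c / x\<^sup>2))"
    and "(\<integral>x. indicator {c..1} x * (1 / x + c / x\<^sup>2) \<partial>lborel) = 1 - c - ln c"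
proof -
  have "(\<integral>x. indicator {c..1} x *\<^sub>R (1 / x + c / x\<^sup>2) \<partial>lborel) = (ln 1 - c / 1) - (ln c - c / c)"
  proof (rule integral_FTC_atLeastAtMost)
    fix x assume "c \<le> x" "x \<le> 1"
    then have "((\<lambda>x. ln x - c / x) has_real_derivative 1 / x + c / x\<^sup>2) (at x within {c..1})"
      using assms by (auto intro!: derivative_eq_intros simp: power2_eq_square field_simps)
    then show "((\<lambda>x. ln x - c / x) has_vector_derivative 1 / x + c / x\<^sup>2) (at x within {c..1})"
      by (simp add: has_real_derivative_iff_has_vector_derivative)
  qed (use assms in \<open>auto intro!: continuous_intros\<close>)
  then show "(\<integral>x. indicator {c..1} x * (1 / x + c / x\<^sup>2) \<partial>lborel) = 1 - c - ln c"
    using assms by simp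
  show "integrable lborel (\<lambda>x. indicator {c..1} x * (1 / x + c / x\<^sup>2))"
    using borel_integrable_atLeastAtMost[of c 1 "\<lambda>x. 1 / x + c / x\<^sup>2"] assms
    by (auto intro!: continuous_intros simp: mult.commute)
qed

lemma integral_inverse_minus_one_atLeastAtMost:
  fixes c :: real
  assumes "0 < c" "c \<le> 1"
  shows "integrable lborel (\<lambda>x. indicator {c..1} x * (1 / x - 1))"
    and "(\<integral>x. indicator {c..1} x * (1 / x - 1) \<partial>lborel) = c - 1 - ln c"
proof -
  have "(\<integral>x. indicator {c..1} x *\<^sub>R (1 / x - 1) \<partial>lborel) = (ln 1 - 1) - (ln c - c)"
  proof (rule integral_FTC_atLeastAtMost)
    fix x assume "c \<le> x" "x \<le> 1"
    then have "((\<lambda>x. ln x - x) has_real_derivative 1 / x - 1) (at x within {c..1})"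
      using assms by (auto intro!: derivative_eq_intros simp: field_simps)
    then show "((\<lambda>x. ln x - x) has_vector_derivative 1 / x - 1) (at x within {c..1})"
      by (simp add: has_real_derivative_iff_has_vector_derivative)
  qed (use assms in \<open>auto intro!: continuous_intros\<close>)
  then show "(\<integral>x. indicator {c..1} x * (1 / x - 1) \<partial>lborel) = c - 1 - ln c"
    using assms by simp
  show "integrable lborel (\<lambda>x. indicator {c..1} x * (1 / x - 1))"
    using borel_integrable_atLeastAtMost[of c 1 "\<lambda>x. 1 / x - 1"] assms
    by (auto intro!: continuous_intros simp: mult.commute)
qed

locale exponential_sample = prob_space M for M :: "'a measure" +
  fixes X :: "nat \<Rightarrow> 'a \<Rightarrow> real"
  assumes indep_exponential: "indep_vars (\<lambda>_. borel) X UNIV"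
    and distributed_exponential: "\<And>i. distributed M lborel (X i) (exponential_density 1)"

sublocale exponential_sample \<subseteq> iid_density_sample M X "exponential_density 1"
  using indep_exponential distributed_exponential
  by unfold_locales (auto simp: exponential_density_nonneg)

context exponential_sample
begin

lemma prob_atMost: "0 \<le> c \<Longrightarrow> prob {\<omega>\<in>space M. X i \<omega> \<le> c} = 1 - exp (- c)"
  using exponential_distributedD_le[OF distributed_exponential[of i], of c] by simp

lemma prob_nonpos: "prob {\<omega>\<in>space M. X i \<omega> \<le> 0} = 0"
  using prob_atMost[of 0 i] by simp

lemma prob_interval_le:
  assumes "a \<le> b"
  shows "prob {\<omega>\<in>space M. a < X i \<omega> \<and> X i \<omega> \<le> b} \<le> b - a"
proof (cases "0 \<le> a")
  case True
  have "prob {\<omega>\<in>space M. a < X i \<omega> \<and> X i \<omega> \<le> b}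
      = prob ({\<omega>\<in>space M. X i \<omega> \<le> b} - {\<omega>\<in>space M. X i \<omega> \<le> a})"
    by (rule arg_cong[where f=prob]) auto
  also have "\<dots> = exp (- a) * (1 - exp (- (b - a)))"
    using True assms by (subst finite_measure_Diff) (auto simp: prob_atMost exp_diff exp_minus field_simps)
  also have "\<dots> \<le> 1 * (b - a)"
  proof (rule mult_mono)
    show "1 - exp (- (b - a)) \<le> b - a"
      using exp_ge_add_one_self[of "- (b - a)"] by linarith
  qed (use True assms in auto)
  finally show ?thesis by simp
next
  case False
  have "prob {\<omega>\<in>space M. a < X i \<omega> \<and> X i \<omega> \<le> b} \<le> prob {\<omega>\<in>space M. X i \<omega> \<le> max 0 b}"
    by (rule finite_measure_mono) auto
  also have "\<dots> = 1 - exp (- max 0 b)" by (simp add: prob_atMost)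
  also have "\<dots> \<le> max 0 b" using exp_ge_add_one_self[of "- max 0 b"] by linarith
  finally show ?thesis using False assms by linarith
qed

lemma prob_pair_interval_le:
  assumes "i \<noteq> j" "a \<le> b"
  shows "prob {\<omega>\<in>space M. (a < X i \<omega> \<and> X i \<omega> \<le> b) \<and> (a < X j \<omega> \<and> X j \<omega> \<le> b)} \<le> (b - a)\<^sup>2"
proof -
  have "prob ((\<lambda>\<omega>. (X i \<omega>, X j \<omega>)) -` ({a<..b} \<times> {a<..b}) \<inter> space M)
      = prob (X i -` {a<..b} \<inter> space M) * prob (X j -` {a<..b} \<inter> space M)"
    by (rule indep_varD[OF indep_var_pair[OF assms(1)]]) auto
  also have "\<dots> \<le> (b - a) * (b - a)"
    using prob_interval_le[OF assms(2)] assms(2) by (intro mult_mono) (auto simp: vimage_def Int_def conj_commute)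
  finally show ?thesis
    by (simp add: vimage_def Int_def conj_commute power2_eq_square)
qed

lemma law_integral_indicator_atMost:
  assumes "0 \<le> c"
  shows "law_integral (indicator {..c}) = 1 - exp (- c)"
proof -
  have "law_integral (indicator {..c}) = expectation (\<lambda>\<omega>. indicator {..c} (X 0 \<omega>))"
    by (rule expectation_transform[symmetric]) simp
  also have "\<dots> = expectation (indicator {\<omega>\<in>space M. X 0 \<omega> \<le> c})"
    by (rule Bochner_Integration.integral_cong) (auto simp: indicator_def)
  finally show ?thesis using prob_atMost[OF assms] by simp
qed

lemma law_integral_recip_above_shift_le:
  assumes c: "0 < c" "c \<le> 1"
  shows "law_integral (recip_above_shift c) \<le> 3 - ln c"
proof -
  note \<mu> = integral_inverse_shift_atLeastAtMost[OF c]
  have density: "integrable lborel (exponential_density 1)"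
    using integrable_law_integral[of "\<lambda>_. 1" 1] by simp
  have "exponential_density 1 x * recip_above_shift c x
      \<le> indicator {c..1} x * (1 / x + c / x\<^sup>2) + 2 * exponential_density 1 x" for x
  proof (cases "c \<le> x")
    case True
    have "exp (- x) \<le> 1" using True c by simp
    moreover have "1 / x + c / x\<^sup>2 \<le> 2" if "1 \<le> x"
    proof -
      have "1 \<le> x\<^sup>2" using that by (simp add: one_le_power)
      then have "c / x\<^sup>2 \<le> 1" using c by (simp add: divide_le_eq_1)
      moreover have "1 / x \<le> 1" using that by simp
      ultimately show ?thesis by linarith
    qed
    ultimately show ?thesis
      using True c mult_right_mono[of "exp (- x)" 1 "1 / x + c / x\<^sup>2"]
        mult_left_mono[of "1 / x + c / x\<^sup>2" 2 "exp (- x)"]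
      by (auto simp: recip_above_shift_def indicator_def exponential_density_def
          intro: add_increasing2[OF mult_nonneg_nonneg[of 2 "exp (- x)"]])
  qed (simp add: recip_above_shift_def exponential_density_nonneg)
  then have "law_integral (recip_above_shift c)
      \<le> (\<integral>x. indicator {c..1} x * (1 / x + c / x\<^sup>2) + 2 * exponential_density 1 x \<partial>lborel)"
    unfolding law_integral_def using \<mu> density recip_above_shift_bounds[OF c(1)]
    by (intro integral_mono integrable_law_integral[where B="2/c"]) auto
  also have "\<dots> = (1 - c - ln c) + 2 * 1"
    using \<mu> density law_integral_const[of 1] by (simp add: law_integral_def)
  finally show ?thesis using c by simp
qed

lemma law_integral_recip_above_ge:
  assumes c: "0 < c" "c \<le> 1"
  shows "- 1 - ln c \<le> law_integral (recip_above c)"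
proof -
  note \<mu> = integral_inverse_minus_one_atLeastAtMost[OF c]
  have "indicator {c..1} x * (1 / x - 1) \<le> exponential_density 1 x * recip_above c x" for x
  proof (cases "c \<le> x \<and> x \<le> 1")
    case True
    then have "(1 - x) / x \<le> exp (- x) / x"
      using exp_ge_add_one_self[of "-x"] c by (intro divide_right_mono) auto
    then show ?thesis
      using True c by (simp add: recip_above_def diff_divide_distrib exponential_density_def)
  qed (use c in \<open>auto simp: recip_above_def exponential_density_nonneg\<close>)
  then have "(\<integral>x. indicator {c..1} x * (1 / x - 1) \<partial>lborel) \<le> law_integral (recip_above c)"
    unfolding law_integral_def using \<mu> recip_above_bounds[OF c(1)] recip_above_shift_bounds[OF c(1)]
    by (intro integral_mono integrable_law_integral[where B="2/c"]) (auto, smt (verit))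
  then show ?thesis using \<mu> c by simp
qed

lemma prob_all_above_le:
  fixes n :: nat and \<beta> :: real
  assumes "0 < \<beta>" "\<beta> \<le> 1" "0 < n"
  shows "prob {\<omega>\<in>space M. \<forall>i<n. \<beta> < X i \<omega>} \<le> 2 / (n * \<beta>)"
proof -
  define p where "p = law_integral (indicator {..\<beta>})"
  have p: "\<beta> / 2 \<le> p"
    using assms one_minus_exp_minus_ge[of \<beta>] by (simp add: p_def law_integral_indicator_atMost)
  have "prob {\<omega>\<in>space M. \<forall>i<n. \<beta> < X i \<omega>}
      \<le> prob {\<omega>\<in>space M. n * p \<le> \<bar>(\<Sum>i<n. indicator {..\<beta>} (X i \<omega>)) - n * p\<bar>}"
  proof (intro finite_measure_mono subsetI)
    fix \<omega> assume "\<omega> \<in> {\<omega>\<in>space M. \<forall>i<n. \<beta> < X i \<omega>}"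
    then have "(\<Sum>i<n. indicator {..\<beta>} (X i \<omega>) :: real) = 0"
      by (intro sum.neutral) (auto simp: indicator_def)
    then show "\<omega> \<in> {\<omega>\<in>space M. n * p \<le> \<bar>(\<Sum>i<n. indicator {..\<beta>} (X i \<omega>)) - n * p\<bar>}"
      using \<open>\<omega> \<in> _\<close> p assms by simp
  qed simp
  also have "\<dots> \<le> real n * 1 * p / (n * p)\<^sup>2"
    unfolding p_def using assms p by (intro chebyshev_sum_transform) (auto simp: p_def)
  also have "\<dots> = 1 / (n * p)"
    using assms p by (simp add: power2_eq_square)
  also have "\<dots> \<le> 2 / (n * \<beta>)"
    using assms p frac_le[of 1 1 "n * (\<beta> / 2)" "n * p"] by (simp add: mult_left_mono)
  finally show ?thesis .
qed

lemma prob_close_pair_le: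
  fixes n :: nat and \<beta> G :: real
  assumes "0 < \<beta>" "0 < G"
  shows "prob {\<omega>\<in>space M. \<exists>i<n. \<exists>j<n. i \<noteq> j \<and> 0 < X i \<omega> \<and> X i \<omega> \<le> \<beta> \<and> X i \<omega> \<le> X j \<omega> \<and> X j \<omega> < X i \<omega> + G}
           \<le> (\<beta> / G + 2) * (2 * n * G)\<^sup>2"
proof -
  txt \<open>The smaller point \<open>X i\<close> of a close pair lies in \<open>((b - 1) G, b G]\<close> for
    \<open>b = \<lceil>X i / G\<rceil> \<le> J\<close>, so both points lie in the bin \<open>((b - 1) G, (b + 1) G]\<close>.\<close>
  define J where "J = nat \<lceil>\<beta> / G\<rceil>"
  define bin where "bin = (\<lambda>(b :: nat, i, j). {\<omega>\<in>space M. i \<noteq> j \<and>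
      ((real b - 1) * G < X i \<omega> \<and> X i \<omega> \<le> (real b + 1) * G) \<and>
      ((real b - 1) * G < X j \<omega> \<and> X j \<omega> \<le> (real b + 1) * G)})"
  define P where "P = {..J} \<times> {..<n} \<times> {..<n}"
  have bin_sets: "bin t \<in> sets M" for t
    unfolding bin_def by (cases t) (simp only: prod.case, measurable)
  have "{\<omega>\<in>space M. \<exists>i<n. \<exists>j<n. i \<noteq> j \<and> 0 < X i \<omega> \<and> X i \<omega> \<le> \<beta> \<and> X i \<omega> \<le> X j \<omega> \<and> X j \<omega> < X i \<omega> + G}
      \<subseteq> (\<Union>t\<in>P. bin t)"
  proof safe
    fix \<omega> i j assume \<omega>: "\<omega> \<in> space M" "i < n" "j < n" "i \<noteq> j" "0 < X i \<omega>" "X i \<omega> \<le> \<beta>"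
      "X i \<omega> \<le> X j \<omega>" "X j \<omega> < X i \<omega> + G"
    define b where "b = nat \<lceil>X i \<omega> / G\<rceil>"
    have "real b = of_int \<lceil>X i \<omega> / G\<rceil>"
      using \<omega> assms by (simp add: b_def)
    then have "real b - 1 < X i \<omega> / G" "X i \<omega> / G \<le> real b"
      using ceiling_correct[of "X i \<omega> / G"] by simp_all
    then have "(real b - 1) * G < X i \<omega>" "X i \<omega> \<le> real b * G"
      using assms by (simp_all add: field_simps)
    moreover have "b \<le> J"
      unfolding b_def J_def using \<omega> assms by (intro nat_mono ceiling_mono divide_right_mono) auto
    ultimately have "\<omega> \<in> bin (b, i, j)" "(b, i, j) \<in> P"
      using \<omega> assms by (auto simp: bin_def P_def algebra_simps)
    then show "\<omega> \<in> (\<Union>t\<in>P. bin t)" by blast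
  qed
  then have "prob {\<omega>\<in>space M. \<exists>i<n. \<exists>j<n. i \<noteq> j \<and> 0 < X i \<omega> \<and> X i \<omega> \<le> \<beta> \<and> X i \<omega> \<le> X j \<omega> \<and> X j \<omega> < X i \<omega> + G}
      \<le> prob (\<Union>t\<in>P. bin t)"
    using bin_sets by (intro finite_measure_mono) auto
  also have "\<dots> \<le> (\<Sum>t\<in>P. prob (bin t))"
    using bin_sets by (intro finite_measure_subadditive_finite) (auto simp: P_def)
  also have "\<dots> \<le> (\<Sum>t\<in>P. (2 * G)\<^sup>2)"
  proof (rule sum_mono)
    fix t assume "t \<in> P"
    obtain b i j where t: "t = (b, i, j)" by (cases t)
    show "prob (bin t) \<le> (2 * G)\<^sup>2"
    proof (cases "i = j")
      case False
      then show ?thesis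
        using prob_pair_interval_le[OF False, of "(real b - 1) * G" "(real b + 1) * G"] assms
        by (simp add: t bin_def algebra_simps)
    qed (simp add: t bin_def)
  qed
  also have "\<dots> = (real J + 1) * (2 * n * G)\<^sup>2"
    by (simp add: P_def power_mult_distrib power2_eq_square algebra_simps)
  also have "\<dots> \<le> (\<beta> / G + 2) * (2 * n * G)\<^sup>2"
    using ceiling_correct[of "\<beta> / G"] assms by (intro mult_right_mono) (auto simp: J_def)
  finally show ?thesis .
qed

lemma prob_count_atMost_ge:
  fixes n :: nat and \<beta> :: real
  assumes "0 < \<beta>" "0 < n"
  shows "prob {\<omega>\<in>space M. 3 * (n * \<beta>) \<le> (\<Sum>i<n. indicator {..2 * \<beta>} (X i \<omega>))} \<le> 2 / (n * \<beta>)"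
proof -
  define p where "p = law_integral (indicator {..2 * \<beta>})"
  have p: "0 \<le> p" "p \<le> 2 * \<beta>"
    using assms exp_ge_add_one_self[of "- 2 * \<beta>"] by (auto simp: p_def law_integral_indicator_atMost)
  have "prob {\<omega>\<in>space M. 3 * (n * \<beta>) \<le> (\<Sum>i<n. indicator {..2 * \<beta>} (X i \<omega>))}
      \<le> prob {\<omega>\<in>space M. n * \<beta> \<le> \<bar>(\<Sum>i<n. indicator {..2 * \<beta>} (X i \<omega>)) - n * p\<bar>}"
  proof -
    have "n * p \<le> n * (2 * \<beta>)" using p by (intro mult_left_mono) auto
    then show ?thesis by (intro finite_measure_mono) auto
  qed
  also have "\<dots> \<le> real n * 1 * p / (n * \<beta>)\<^sup>2"
    unfolding p_def using assms by (intro chebyshev_sum_transform) auto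
  also have "\<dots> \<le> n * (2 * \<beta>) / (n * \<beta>)\<^sup>2"
    using p assms by (intro divide_right_mono mult_left_mono) auto
  also have "\<dots> = 2 / (n * \<beta>)"
    using assms by (simp add: power2_eq_square)
  finally show ?thesis .
qed

lemma prob_recip_above_shift_sum_gt:
  fixes n :: nat and \<beta> t :: real
  assumes "0 < \<beta>" "2 * \<beta> \<le> 1" "0 < t"
  shows "prob {\<omega>\<in>space M. n * (3 - ln (2 * \<beta>)) + t < (\<Sum>i<n. recip_above_shift (2 * \<beta>) (X i \<omega>))}
           \<le> n * (3 - ln (2 * \<beta>)) / (\<beta> * t\<^sup>2)"
proof -
  define \<mu> where "\<mu> = law_integral (recip_above_shift (2 * \<beta>))"
  have bounded: "0 \<le> recip_above_shift (2 * \<beta>) x" "recip_above_shift (2 * \<beta>) x \<le> 1 / \<beta>" for x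
    using recip_above_shift_bounds[of "2 * \<beta>" x] assms by auto
  have \<mu>: "0 \<le> \<mu>" "\<mu> \<le> 3 - ln (2 * \<beta>)"
    using assms recip_above_shift_bounds law_integral_recip_above_shift_le[of "2 * \<beta>"]
    by (auto simp: \<mu>_def intro!: law_integral_nonneg)
  have "prob {\<omega>\<in>space M. n * (3 - ln (2 * \<beta>)) + t < (\<Sum>i<n. recip_above_shift (2 * \<beta>) (X i \<omega>))}
      \<le> prob {\<omega>\<in>space M. t \<le> \<bar>(\<Sum>i<n. recip_above_shift (2 * \<beta>) (X i \<omega>)) - n * \<mu>\<bar>}"
    using \<mu> mult_left_mono[of \<mu> "3 - ln (2 * \<beta>)" n] by (intro finite_measure_mono) auto
  also have "\<dots> \<le> n * (2 / (2 * \<beta>)) * \<mu> / t\<^sup>2"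
    unfolding \<mu>_def using assms bounded by (intro chebyshev_sum_transform) auto
  also have "\<dots> \<le> n * (3 - ln (2 * \<beta>)) / (\<beta> * t\<^sup>2)"
    using assms \<mu> mult_left_mono[of \<mu> "3 - ln (2 * \<beta>)" n] by (simp add: field_simps divide_right_mono)
  finally show ?thesis .
qed

lemma prob_recip_above_sum_lt:
  fixes n :: nat and \<beta> t :: real
  assumes "0 < \<beta>" "2 * \<beta> \<le> 1" "0 < t"
  shows "prob {\<omega>\<in>space M. (\<Sum>i<n. recip_above (2 * \<beta>) (X i \<omega>)) < n * (- 1 - ln (2 * \<beta>)) - t}
           \<le> n * (3 - ln (2 * \<beta>)) / (\<beta> * t\<^sup>2)"
proof -
  define \<mu> where "\<mu> = law_integral (recip_above (2 * \<beta>))"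
  have bounded: "0 \<le> recip_above (2 * \<beta>) x" "recip_above (2 * \<beta>) x \<le> 1 / \<beta>"
    "recip_above (2 * \<beta>) x \<le> recip_above_shift (2 * \<beta>) x" "recip_above_shift (2 * \<beta>) x \<le> 1 / \<beta>" for x
    using recip_above_bounds[of "2 * \<beta>" x] recip_above_shift_bounds[of "2 * \<beta>" x] assms by auto
  have "\<mu> \<le> law_integral (recip_above_shift (2 * \<beta>))"
    unfolding \<mu>_def using bounded recip_above_shift_bounds(1)[of "2 * \<beta>"] assms
    by (intro law_integral_mono[where B="1 / \<beta>"]) auto
  then have \<mu>: "0 \<le> \<mu>" "- 1 - ln (2 * \<beta>) \<le> \<mu>" "\<mu> \<le> 3 - ln (2 * \<beta>)"
    using assms bounded law_integral_recip_above_ge[of "2 * \<beta>"] law_integral_recip_above_shift_le[of "2 * \<beta>"]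
    by (auto simp: \<mu>_def intro!: law_integral_nonneg)
  have "prob {\<omega>\<in>space M. (\<Sum>i<n. recip_above (2 * \<beta>) (X i \<omega>)) < n * (- 1 - ln (2 * \<beta>)) - t}
      \<le> prob {\<omega>\<in>space M. t \<le> \<bar>(\<Sum>i<n. recip_above (2 * \<beta>) (X i \<omega>)) - n * \<mu>\<bar>}"
    using \<mu> mult_left_mono[of "- 1 - ln (2 * \<beta>)" \<mu> n] by (intro finite_measure_mono) auto
  also have "\<dots> \<le> n * (2 / (2 * \<beta>)) * \<mu> / t\<^sup>2"
    unfolding \<mu>_def using assms bounded by (intro chebyshev_sum_transform) auto
  also have "\<dots> \<le> n * (3 - ln (2 * \<beta>)) / (\<beta> * t\<^sup>2)"
    using assms \<mu> mult_left_mono[of \<mu> "3 - ln (2 * \<beta>)" n] by (simp add: field_simps divide_right_mono)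
  finally show ?thesis .
qed

definition typical :: "nat \<Rightarrow> real \<Rightarrow> real \<Rightarrow> real \<Rightarrow> 'a set" where
  "typical n \<beta> G t = {\<omega>\<in>space M. (\<forall>i<n. 0 < X i \<omega>) \<and> (\<exists>i<n. X i \<omega> \<le> \<beta>)
     \<and> (\<forall>i<n. \<forall>j<n. i \<noteq> j \<longrightarrow> X i \<omega> \<le> \<beta> \<longrightarrow> X i \<omega> \<le> X j \<omega> \<longrightarrow> X i \<omega> + G \<le> X j \<omega>)
     \<and> (\<Sum>i<n. indicator {..2 * \<beta>} (X i \<omega>)) < 3 * (n * \<beta>)
     \<and> (\<Sum>i<n. recip_above_shift (2 * \<beta>) (X i \<omega>)) \<le> n * (3 - ln (2 * \<beta>)) + t
     \<and> n * (- 1 - ln (2 * \<beta>)) - t \<le> (\<Sum>i<n. recip_above (2 * \<beta>) (X i \<omega>))}"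

lemma typical_sets [measurable]: "typical n \<beta> G t \<in> sets M"
  unfolding typical_def by measurable

lemma prob_not_typical_le:
  fixes n :: nat and \<beta> G t :: real
  assumes "0 < n" "0 < \<beta>" "2 * \<beta> \<le> 1" "0 < G" "0 < t"
  shows "prob (space M - typical n \<beta> G t)
           \<le> 4 / (n * \<beta>) + (\<beta> / G + 2) * (2 * n * G)\<^sup>2 + 2 * (n * (3 - ln (2 * \<beta>)) / (\<beta> * t\<^sup>2))"
proof -
  define Nonpos where "Nonpos = (\<Union>i<n. {\<omega>\<in>space M. X i \<omega> \<le> 0})"
  define Sparse where "Sparse = {\<omega>\<in>space M. \<forall>i<n. \<beta> < X i \<omega>}"
  define Close where "Close = {\<omega>\<in>space M. \<exists>i<n. \<exists>j<n. i \<noteq> j \<and> 0 < X i \<omega> \<and> X i \<omega> \<le> \<beta> \<and> X i \<omega> \<le> X j \<omega> \<and> X j \<omega> < X i \<omega> + G}"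
  define Crowded where "Crowded = {\<omega>\<in>space M. 3 * (n * \<beta>) \<le> (\<Sum>i<n. indicator {..2 * \<beta>} (X i \<omega>))}"
  define Large where "Large = {\<omega>\<in>space M. n * (3 - ln (2 * \<beta>)) + t < (\<Sum>i<n. recip_above_shift (2 * \<beta>) (X i \<omega>))}"
  define Small where "Small = {\<omega>\<in>space M. (\<Sum>i<n. recip_above (2 * \<beta>) (X i \<omega>)) < n * (- 1 - ln (2 * \<beta>)) - t}"
  have sets: "Nonpos \<in> sets M" "Sparse \<in> sets M" "Close \<in> sets M" "Crowded \<in> sets M" "Large \<in> sets M" "Small \<in> sets M"
    unfolding Nonpos_def Sparse_def Close_def Crowded_def Large_def Small_def by measurable
  have "space M - typical n \<beta> G t \<subseteq> Nonpos \<union> Sparse \<union> Close \<union> Crowded \<union> Large \<union> Small"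
    unfolding typical_def Nonpos_def Sparse_def Close_def Crowded_def Large_def Small_def
    by (auto simp: not_less not_le) (meson lessThan_iff not_less)
  then have "prob (space M - typical n \<beta> G t) \<le> prob (Nonpos \<union> Sparse \<union> Close \<union> Crowded \<union> Large \<union> Small)"
    using sets by (intro finite_measure_mono) auto
  also have "\<dots> \<le> prob Nonpos + prob Sparse + prob Close + prob Crowded + prob Large + prob Small"
    using sets by (smt (verit) measure_Un_le sets.Un)
  also have "\<dots> \<le> 4 / (n * \<beta>) + (\<beta> / G + 2) * (2 * n * G)\<^sup>2 + 2 * (n * (3 - ln (2 * \<beta>)) / (\<beta> * t\<^sup>2))"
  proof -
    have "prob Nonpos \<le> (\<Sum>i<n. prob {\<omega>\<in>space M. X i \<omega> \<le> 0})"
      unfolding Nonpos_def by (intro finite_measure_subadditive_finite) auto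
    then have "prob Nonpos \<le> 0" by (simp add: prob_nonpos)
    moreover have "prob Sparse \<le> 2 / (n * \<beta>)"
      unfolding Sparse_def using assms by (intro prob_all_above_le) auto
    moreover have "prob Close \<le> (\<beta> / G + 2) * (2 * n * G)\<^sup>2"
      unfolding Close_def using assms by (intro prob_close_pair_le)
    moreover have "prob Crowded \<le> 2 / (n * \<beta>)"
      unfolding Crowded_def using assms by (intro prob_count_atMost_ge)
    moreover have "prob Large \<le> n * (3 - ln (2 * \<beta>)) / (\<beta> * t\<^sup>2)"
      unfolding Large_def using assms by (intro prob_recip_above_shift_sum_gt)
    moreover have "prob Small \<le> n * (3 - ln (2 * \<beta>)) / (\<beta> * t\<^sup>2)"
      unfolding Small_def using assms by (intro prob_recip_above_sum_lt)
    moreover have "4 / (n * \<beta>) = 2 / (n * \<beta>) + 2 / (n * \<beta>)" by simp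
    ultimately show ?thesis by (smt (verit))
  qed
  finally show ?thesis .
qed

lemma prob_rescaled_critical_gap_gt_le:
  fixes n :: nat and \<epsilon> \<delta> h h2 :: real
  assumes "\<epsilon> \<le> \<delta>" and n: "2 \<le> n" and \<epsilon>: "0 < \<epsilon>" "\<epsilon> \<le> 1/2" and h: "1 \<le> h" "0 < h2" "h / n \<le> 1/4"
    and gap_scale: "(1 + \<epsilon>) * h2 < ln n"
    and log_scale: "3 * (ln (2 * h) + 1) < \<epsilon> * ln n"
    and error_scale: "3 + 3 * h * h2 + h2 < 7/8 * \<epsilon> * ln n"
  shows "prob {\<omega>\<in>space M. \<delta> < \<bar>n * ln n * (smallest_critical_point (\<lambda>i. X i \<omega>) n - Min ((\<lambda>i. X i \<omega>) ` {..<n})) - 1\<bar>}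
           \<le> 4 / h + 4 * (h * h2 + 2) / h2\<^sup>2 + 128 * (ln n + 3) / (\<epsilon>\<^sup>2 * h * (ln n)\<^sup>2)"
proof -
  define \<beta> where "\<beta> = h / n"
  define G where "G = 1 / (n * h2)"
  define l where "l = ln (real n)"
  define t where "t = \<epsilon> * (n * l) / 8"
  have pos: "0 < real n" "0 < l" "0 < \<beta>" "2 * \<beta> \<le> 1" "0 < G" "0 < t"
    using n h \<epsilon> by (auto simp: l_def \<beta>_def G_def t_def)
  have "\<bar>n * ln n * (smallest_critical_point (\<lambda>i. X i \<omega>) n - Min ((\<lambda>i. X i \<omega>) ` {..<n})) - 1\<bar> \<le> \<epsilon>"
    if "\<omega> \<in> typical n \<beta> G t" for \<omega>
    using that n \<epsilon> h gap_scale log_scale error_scale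
    by (intro rescaled_critical_gap_of_regular_sample)
       (auto simp: typical_def \<beta>_def G_def t_def l_def)
  then have "prob {\<omega>\<in>space M. \<delta> < \<bar>n * ln n * (smallest_critical_point (\<lambda>i. X i \<omega>) n - Min ((\<lambda>i. X i \<omega>) ` {..<n})) - 1\<bar>}
      \<le> prob (space M - typical n \<beta> G t)"
    using \<open>\<epsilon> \<le> \<delta>\<close> by (intro finite_measure_mono) force+
  also have "\<dots> \<le> 4 / (n * \<beta>) + (\<beta> / G + 2) * (2 * n * G)\<^sup>2 + 2 * (n * (3 - ln (2 * \<beta>)) / (\<beta> * t\<^sup>2))"
    using pos by (intro prob_not_typical_le) auto
  also have "\<dots> \<le> 4 / h + 4 * (h * h2 + 2) / h2\<^sup>2 + 128 * (ln n + 3) / (\<epsilon>\<^sup>2 * h * (ln n)\<^sup>2)"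
  proof -
    have ln_\<beta>: "ln (2 * \<beta>) = ln (2 * h) - l"
      using n h by (simp add: \<beta>_def l_def ln_div)
    have "2 * (n * (3 - ln (2 * \<beta>)) / (\<beta> * t\<^sup>2)) = 128 * (l + 3 - ln (2 * h)) / (\<epsilon>\<^sup>2 * h * l\<^sup>2)"
      unfolding ln_\<beta> using pos \<epsilon> by (simp add: \<beta>_def t_def power2_eq_square field_simps)
    also have "\<dots> \<le> 128 * (ln n + 3) / (\<epsilon>\<^sup>2 * h * (ln n)\<^sup>2)"
      unfolding l_def using pos \<epsilon> h by (intro divide_right_mono) (auto simp: l_def)
    finally have "2 * (n * (3 - ln (2 * \<beta>)) / (\<beta> * t\<^sup>2)) \<le> 128 * (ln n + 3) / (\<epsilon>\<^sup>2 * h * (ln n)\<^sup>2)" .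
    moreover have "4 / (n * \<beta>) = 4 / h" "(\<beta> / G + 2) * (2 * n * G)\<^sup>2 = 4 * (h * h2 + 2) / h2\<^sup>2"
      using pos by (simp_all add: \<beta>_def G_def power2_eq_square field_simps)
    ultimately show ?thesis by (smt (verit))
  qed
  finally show ?thesis .
qed

end

section \<open>Convergence in probability\<close>

lemma eventually_log_scales:
  fixes \<epsilon> :: real
  assumes "0 < \<epsilon>" "\<epsilon> \<le> 1/2"
  defines "h \<equiv> \<lambda>n::nat. ln n powr (1/8)" and "h2 \<equiv> \<lambda>n::nat. ln n powr (1/4)"
  shows "\<forall>\<^sub>F n in sequentially. 2 \<le> n \<and> 1 \<le> h n \<and> 0 < h2 n \<and> h n / n \<le> 1/4
    \<and> (1 + \<epsilon>) * h2 n < ln n \<and> 3 * (ln (2 * h n) + 1) < \<epsilon> * ln n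
    \<and> 3 + 3 * h n * h2 n + h2 n < 7/8 * \<epsilon> * ln n"
proof -
  have "\<forall>\<^sub>F n in sequentially. 3/2 * h2 n < ln n"
    unfolding h2_def by real_asymp
  then have "\<forall>\<^sub>F n in sequentially. (1 + \<epsilon>) * h2 n < ln n"
  proof eventually_elim
    case (elim n)
    have "(1 + \<epsilon>) * h2 n \<le> 3/2 * h2 n"
      using assms by (intro mult_right_mono) (auto simp: h2_def)
    with elim show ?case by linarith
  qed
  moreover have "\<forall>\<^sub>F n in sequentially. 2 \<le> n" "\<forall>\<^sub>F n in sequentially. 1 \<le> h n"
    "\<forall>\<^sub>F n in sequentially. 0 < h2 n" "\<forall>\<^sub>F n in sequentially. h n / n \<le> 1/4"
    unfolding h_def h2_def by real_asymp+
  moreover have "\<forall>\<^sub>F n in sequentially. 3 * (ln (2 * h n) + 1) < \<epsilon> * ln n"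
    unfolding h_def using assms by real_asymp
  moreover have "\<forall>\<^sub>F n in sequentially. 3 + 3 * h n * h2 n + h2 n < 7/8 * \<epsilon> * ln n"
    unfolding h_def h2_def using assms by real_asymp
  ultimately show ?thesis by eventually_elim blast
qed

context exponential_sample
begin

theorem rescaled_critical_gap_tendsto_zero:
  assumes "0 < \<delta>"
  shows "(\<lambda>n. prob {\<omega>\<in>space M. \<delta> < \<bar>n * ln n * (smallest_critical_point (\<lambda>i. X i \<omega>) n - Min ((\<lambda>i. X i \<omega>) ` {..<n})) - 1\<bar>})
           \<longlonglongrightarrow> 0"
proof (rule tendsto_sandwich[OF _ _ tendsto_const])
  define \<epsilon> where "\<epsilon> = min \<delta> (1/2)"
  define h where "h n = ln (real n) powr (1/8)" for n :: nat
  define h2 where "h2 n = ln (real n) powr (1/4)" for n :: nat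
  have \<epsilon>: "0 < \<epsilon>" "\<epsilon> \<le> 1/2" "\<epsilon> \<le> \<delta>" using assms by (auto simp: \<epsilon>_def)
  show "(\<lambda>n. 4 / h n + 4 * (h n * h2 n + 2) / (h2 n)\<^sup>2 + 128 * (ln n + 3) / (\<epsilon>\<^sup>2 * h n * (ln n)\<^sup>2)) \<longlonglongrightarrow> 0"
    unfolding h_def h2_def using \<epsilon> by real_asymp
  show "\<forall>\<^sub>F n in sequentially. prob {\<omega>\<in>space M. \<delta> < \<bar>n * ln n * (smallest_critical_point (\<lambda>i. X i \<omega>) n - Min ((\<lambda>i. X i \<omega>) ` {..<n})) - 1\<bar>}
      \<le> 4 / h n + 4 * (h n * h2 n + 2) / (h2 n)\<^sup>2 + 128 * (ln n + 3) / (\<epsilon>\<^sup>2 * h n * (ln n)\<^sup>2)"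
    using eventually_log_scales[OF \<epsilon>(1,2)] unfolding h_def h2_def
  proof eventually_elim
    case (elim n)
    then show ?case by (intro prob_rescaled_critical_gap_gt_le[OF \<epsilon>(3) _ \<epsilon>(1,2)]) auto
  qed
qed simp

end

theorem mainTheorem16:
  fixes M :: "'a measure" and X :: "nat \<Rightarrow> 'a \<Rightarrow> real"
  assumes "prob_space M"
    and "prob_space.indep_vars M (\<lambda>_. borel) X UNIV"
    and "\<And>i. distributed M lborel (X i) (exponential_density 1)"
  shows "\<forall>\<epsilon>>0. (\<lambda>n. measure M {\<omega> \<in> space M.
            \<bar>real n * ln (real n) * (smallest_critical_point (\<lambda>i. X i \<omega>) n
               - Min ((\<lambda>i. X i \<omega>) ` {..<n})) - 1\<bar> > \<epsilon>}) \<longlonglongrightarrow> 0"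
proof -
  interpret exponential_sample M X
    using assms by (simp add: exponential_sample_def exponential_sample_axioms_def)
  show ?thesis using rescaled_critical_gap_tendsto_zero by blast
qed

end
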